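(* Let $\mathcal X=[0,1]$, let $P_X$ be Lebesgue measure on $[0,1]$, and for $a\ge0$ let $k_{1,a}(x,y)=a+(x\wedge y)$. Then for all $a\ge0$ and $\gamma>0$, the quantity $H_\gamma$ associated with $k_{1,a}$ and $P_X$ satisfies $H_\gamma\le 2+1/\sqrt\gamma$.
   Context: For a kernel $k$ with a decomposition $k(x,y)=\sum_{r\in\mathcal R}\nu_re_r(x)e_r(y)$ where the $\nu_r>0$ are the (positive) eigenvalues of the integral operator $f\mapsto\int k(x,\cdot)f(x)\,dP_X(x)$ on $L_2(P_X)$ and $(e_r)$ are corresponding $L_2(P_X)$-orthonormal eigenfunctions, define for $\gamma>0$: $a_r=1/(1+\gamma/\nu_r)$ and $H_\gamma=\sup_{x\in\mathcal X}\sum_{r\in\mathcal R}a_re_r(x)^2$ (this does not depend on the choice of orthonormal eigenfunctions). *)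

theory Defs
  imports "HOL-Analysis.Analysis"
begin

definition k1 :: "real \<Rightarrow> real \<Rightarrow> real \<Rightarrow> real" where
  "k1 a x y = a + min x y"

text \<open>The eigen-equation is required pointwise on X, which
  fixes the (canonical) representative of each eigenfunction.\<close>
definition eigen_decomp ::
  "real set \<Rightarrow> real measure \<Rightarrow> (real \<Rightarrow> real \<Rightarrow> real) \<Rightarrow> ('r \<Rightarrow> real) \<Rightarrow> ('r \<Rightarrow> real \<Rightarrow> real) \<Rightarrow> 'r set \<Rightarrow> bool"
where
  "eigen_decomp X M k \<nu> e R \<longleftrightarrow>
     (\<forall>r\<in>R. \<nu> r > 0) \<and>
     (\<forall>r\<in>R. e r \<in> borel_measurable M \<and> integrable M (\<lambda>x. (e r x)\<^sup>2)) \<and>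
     (\<forall>r\<in>R. \<forall>s\<in>R. (\<integral>x. e r x * e s x \<partial>M) = (if r = s then 1 else 0)) \<and>
     (\<forall>r\<in>R. \<forall>y\<in>X. integrable M (\<lambda>x. k x y * e r x) \<and>
                     (\<integral>x. k x y * e r x \<partial>M) = \<nu> r * e r y) \<and>
     (\<forall>x\<in>X. \<forall>y\<in>X. ((\<lambda>r. \<nu> r * e r x * e r y) has_sum k x y) R)"

definition H_gamma :: "real set \<Rightarrow> real \<Rightarrow> ('r \<Rightarrow> real) \<Rightarrow> ('r \<Rightarrow> real \<Rightarrow> real) \<Rightarrow> 'r set \<Rightarrow> ennreal"
where
  "H_gamma X \<gamma> \<nu> e R =
     (SUP x\<in>X. (\<Sum>\<^sub>\<infinity>r\<in>R. ennreal (1 / (1 + \<gamma> / \<nu> r) * (e r x)\<^sup>2)))"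

end

theory Submission
  imports Defs
begin

text \<open>Fix \<open>x \<in> [0,1]\<close> and a finite set \<open>F\<close> of eigenpairs, put \<open>c_r = a_r e_r(x)\<close>,
  \<open>h = sum_r c_r e_r\<close> and \<open>g = sum_r (c_r / nu_r) e_r\<close>.  Then \<open>h = T g\<close> for the integral
  operator \<open>T\<close> of \<open>k_{1,a}\<close>, \<open>h(x) = S := sum_r a_r e_r(x)^2\<close>, and by orthonormality
  \<open>||h||^2 + gamma <g, h> = S\<close>.  Now \<open>(T g)'(y) = int_y^1 g\<close>, so integration by parts gives
  \<open><g, T g> >= ||(T g)'||^2\<close>; with the elementary bound
  \<open>h(x)^2 <= (1 + 1/s) ||h||^2 + s ||h'||^2\<close> for \<open>s = sqrt gamma\<close> this yields
  \<open>S^2 <= (1 + 1/sqrt gamma) S\<close>, i.e. \<open>S <= 1 + 1/sqrt gamma\<close>.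
  Eigenfunctions are Lipschitz because \<open>k_{1,a}\<close> is 1-Lipschitz in its second argument, so all
  integrals can be taken as Henstock-Kurzweil integrals of continuous functions.\<close>

lemma eigenfunction_lipschitz:
  fixes M :: "real measure" and k :: "real \<Rightarrow> real \<Rightarrow> real" and e :: "real \<Rightarrow> real"
  assumes "\<nu> > 0" and "integrable M e"
    and k_lipschitz: "\<And>x y z. x \<in> space M \<Longrightarrow> \<bar>k x y - k x z\<bar> \<le> \<bar>y - z\<bar>"
    and integrable_k: "\<And>y. y \<in> X \<Longrightarrow> integrable M (\<lambda>x. k x y * e x)"
    and eigen: "\<And>y. y \<in> X \<Longrightarrow> (\<integral>x. k x y * e x \<partial>M) = \<nu> * e y"
  shows "((\<integral>x. \<bar>e x\<bar> \<partial>M) / \<nu>)-lipschitz_on X e"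
proof (rule lipschitz_onI)
  fix y z assume "y \<in> X" "z \<in> X"
  then have "\<nu> * e y - \<nu> * e z = (\<integral>x. (k x y - k x z) * e x \<partial>M)"
    by (simp add: eigen[symmetric] integrable_k left_diff_distrib)
  also have "\<bar>\<dots>\<bar> \<le> (\<integral>x. \<bar>(k x y - k x z) * e x\<bar> \<partial>M)"
    by (rule integral_abs_bound)
  also have "\<dots> \<le> (\<integral>x. \<bar>y - z\<bar> * \<bar>e x\<bar> \<partial>M)"
  proof (rule integral_mono)
    show "integrable M (\<lambda>x. \<bar>(k x y - k x z) * e x\<bar>)"
      using \<open>y \<in> X\<close> \<open>z \<in> X\<close> by (simp add: integrable_k left_diff_distrib)
  qed (use assms(2) k_lipschitz in \<open>auto simp: abs_mult intro!: mult_right_mono\<close>)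
  finally have "\<nu> * \<bar>e y - e z\<bar> \<le> \<bar>y - z\<bar> * (\<integral>x. \<bar>e x\<bar> \<partial>M)"
    using \<open>\<nu> > 0\<close> by (simp add: abs_mult right_diff_distrib[symmetric])
  with \<open>\<nu> > 0\<close> show "dist (e y) (e z) \<le> (\<integral>x. \<bar>e x\<bar> \<partial>M) / \<nu> * dist y z"
    by (simp add: dist_real_def field_simps)
qed (use \<open>\<nu> > 0\<close> in \<open>simp add: integral_nonneg_AE\<close>)

lemma has_integral_orthonormal_expansion_product:
  fixes e :: "'r \<Rightarrow> real \<Rightarrow> real"
  assumes "finite F"
    and "\<And>r s. r \<in> F \<Longrightarrow> s \<in> F \<Longrightarrow> ((\<lambda>t. e r t * e s t) has_integral (if r = s then 1 else 0)) S"
  shows "((\<lambda>t. (\<Sum>r\<in>F. \<alpha> r * e r t) * (\<Sum>r\<in>F. \<beta> r * e r t)) has_integral (\<Sum>r\<in>F. \<alpha> r * \<beta> r)) S"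
proof -
  have "((\<lambda>t. \<Sum>r\<in>F. \<Sum>s\<in>F. \<alpha> r * \<beta> s * (e r t * e s t))
          has_integral (\<Sum>r\<in>F. \<Sum>s\<in>F. \<alpha> r * \<beta> s * (if r = s then 1 else 0))) S"
    using assms by (intro has_integral_sum has_integral_mult_right) auto
  moreover have "(\<Sum>r\<in>F. \<Sum>s\<in>F. \<alpha> r * \<beta> s * (if r = s then 1 else 0)) = (\<Sum>r\<in>F. \<alpha> r * \<beta> r)"
    using \<open>finite F\<close> by (simp add: if_distrib[of "\<lambda>c. _ * c"] cong: if_cong)
  ultimately show ?thesis
    by (simp add: sum_product algebra_simps)
qed

lemma abs_diff_le_integral_abs_derivative:
  fixes F F' :: "real \<Rightarrow> real"
  assumes deriv: "\<And>y. y \<in> {a..b} \<Longrightarrow> (F has_real_derivative F' y) (at y within {a..b})"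
    and "continuous_on {a..b} F'" and "u \<in> {a..b}" and "v \<in> {a..b}"
  shows "\<bar>F v - F u\<bar> \<le> integral {a..b} (\<lambda>t. \<bar>F' t\<bar>)"
proof -
  have "\<bar>F v - F u\<bar> \<le> integral {a..b} (\<lambda>t. \<bar>F' t\<bar>)" if "u \<le> v" "u \<in> {a..b}" "v \<in> {a..b}" for u v
  proof -
    have sub: "{u..v} \<subseteq> {a..b}" using that by auto
    have cont: "continuous_on {u..v} F'"
      using sub by (rule continuous_on_subset[OF \<open>continuous_on {a..b} F'\<close>])
    have "(F' has_integral F v - F u) {u..v}"
    proof (rule fundamental_theorem_of_calculus[OF \<open>u \<le> v\<close>])
      fix y assume "y \<in> {u..v}"
      with DERIV_subset[OF deriv sub] sub
      show "(F has_vector_derivative F' y) (at y within {u..v})"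
        by (auto simp: has_real_derivative_iff_has_vector_derivative[symmetric])
    qed
    then have "\<bar>F v - F u\<bar> = \<bar>integral {u..v} F'\<bar>" by (simp add: integral_unique)
    also have "\<dots> \<le> integral {u..v} (\<lambda>t. \<bar>F' t\<bar>)"
      using Henstock_Kurzweil_Integration.integral_norm_bound_integral[of F' "{u..v}" "\<lambda>t. \<bar>F' t\<bar>"] cont
      by (auto intro!: integrable_continuous_interval continuous_intros)
    also have "\<dots> \<le> integral {a..b} (\<lambda>t. \<bar>F' t\<bar>)"
      using sub \<open>continuous_on {a..b} F'\<close>
      by (intro integral_subset_le integrable_continuous_interval cont continuous_intros) auto
    finally show ?thesis .
  qed
  from this[of u v] this[of v u] assms(3,4) show ?thesis
    by (cases "u \<le> v") (auto simp: abs_minus_commute)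
qed

lemma sq_le_integral_sq_plus_integral_derivative_sq:
  fixes f f' :: "real \<Rightarrow> real"
  assumes "s > 0" and deriv: "\<And>y. y \<in> {0..1} \<Longrightarrow> (f has_real_derivative f' y) (at y within {0..1})"
    and "continuous_on {0..1} f'" and "x \<in> {0..1}"
  shows "(f x)\<^sup>2 \<le> (1 + 1/s) * integral {0..1} (\<lambda>t. (f t)\<^sup>2) + s * integral {0..1} (\<lambda>t. (f' t)\<^sup>2)"
proof -
  have cont_f: "continuous_on {0..1} f"
    unfolding continuous_on_eq_continuous_within using deriv DERIV_continuous by blast
  then have int_f2: "(\<lambda>t. (f t)\<^sup>2) integrable_on {0..1}"
    and cont_ff': "continuous_on {0..1} (\<lambda>t. 2 * f t * f' t)"
    using \<open>continuous_on {0..1} f'\<close> by (auto intro!: integrable_continuous_interval continuous_intros)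
  obtain y0 where "y0 \<in> {0..1}" and y0_min: "\<And>y. y \<in> {0..1} \<Longrightarrow> (f y0)\<^sup>2 \<le> (f y)\<^sup>2"
  proof -
    have "\<exists>y0\<in>{0..1}. \<forall>y\<in>{0..1}. (f y0)\<^sup>2 \<le> (f y)\<^sup>2"
      using \<open>continuous_on {0..1} f\<close> by (intro continuous_attains_inf continuous_intros) auto
    with that show ?thesis by blast
  qed
  have "(f y0)\<^sup>2 = integral {0..1} (\<lambda>t::real. (f y0)\<^sup>2)" by simp
  also have "\<dots> \<le> integral {0..1} (\<lambda>t. (f t)\<^sup>2)"
    using y0_min int_f2 by (intro integral_le) auto
  finally have "(f y0)\<^sup>2 \<le> integral {0..1} (\<lambda>t. (f t)\<^sup>2)" .
  moreover have "(f x)\<^sup>2 - (f y0)\<^sup>2 \<le> integral {0..1} (\<lambda>t. \<bar>2 * f t * f' t\<bar>)"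
  proof -
    have "((\<lambda>t. (f t)\<^sup>2) has_real_derivative 2 * f y * f' y) (at y within {0..1})"
      if "y \<in> {0..1}" for y
      using DERIV_power[OF deriv[OF that], of 2] by (simp add: algebra_simps)
    from abs_diff_le_integral_abs_derivative[OF this cont_ff' \<open>y0 \<in> {0..1}\<close> \<open>x \<in> {0..1}\<close>]
    show ?thesis by simp
  qed
  moreover have "integral {0..1} (\<lambda>t. \<bar>2 * f t * f' t\<bar>)
      \<le> integral {0..1} (\<lambda>t. 1/s * (f t)\<^sup>2 + s * (f' t)\<^sup>2)"
  proof (rule integral_le)
    fix t
    \<comment> \<open>AM-GM\<close>
    have "0 \<le> (\<bar>f t\<bar> - s * \<bar>f' t\<bar>)\<^sup>2 / s" using \<open>s > 0\<close> by simp
    then show "\<bar>2 * f t * f' t\<bar> \<le> 1/s * (f t)\<^sup>2 + s * (f' t)\<^sup>2"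
      using \<open>s > 0\<close> by (simp add: power2_eq_square field_simps abs_mult)
  qed (use cont_f \<open>continuous_on {0..1} f'\<close> \<open>s > 0\<close>
        in \<open>auto intro!: integrable_continuous_interval continuous_intros\<close>)
  moreover have "integral {0..1} (\<lambda>t. 1/s * (f t)\<^sup>2 + s * (f' t)\<^sup>2)
      = 1/s * integral {0..1} (\<lambda>t. (f t)\<^sup>2) + s * integral {0..1} (\<lambda>t. (f' t)\<^sup>2)"
    using cont_f \<open>continuous_on {0..1} f'\<close> \<open>s > 0\<close>
    by (subst integral_add) (auto intro!: integrable_continuous_interval continuous_intros)
  ultimately show ?thesis by (simp add: algebra_simps)
qed

definition k1_op :: "real \<Rightarrow> (real \<Rightarrow> real) \<Rightarrow> real \<Rightarrow> real" where
  "k1_op a g y = integral {0..1} (\<lambda>t. k1 a t y * g t)"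

lemma k1_op_eq:
  assumes g: "continuous_on {0..1} g" and y: "y \<in> {0..1}"
  shows "k1_op a g y = a * integral {0..1} g + integral {0..y} (\<lambda>t. t * g t) + y * integral {y..1} g"
proof -
  let ?f = "\<lambda>t. k1 a t y * g t"
  have "k1_op a g y = integral {0..y} ?f + integral {y..1} ?f"
    unfolding k1_op_def using y g
    by (intro Henstock_Kurzweil_Integration.integral_combine[symmetric] integrable_continuous_interval)
       (auto simp: k1_def intro!: continuous_intros)
  also have "integral {0..y} ?f = integral {0..y} (\<lambda>t. a * g t + t * g t)"
    by (rule integral_cong) (auto simp: k1_def algebra_simps)
  also have "\<dots> = a * integral {0..y} g + integral {0..y} (\<lambda>t. t * g t)"
    using y g by (subst integral_add)
      (auto intro!: integrable_continuous_interval continuous_intros intro: continuous_on_subset[OF g])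
  also have "integral {y..1} ?f = integral {y..1} (\<lambda>t. (a + y) * g t)"
    by (rule integral_cong) (auto simp: k1_def)
  also have "\<dots> = (a + y) * integral {y..1} g"
    by (rule integral_mult_right)
  also have "integral {0..1} g = integral {0..y} g + integral {y..1} g"
    using y g by (intro Henstock_Kurzweil_Integration.integral_combine[symmetric] integrable_continuous_interval) auto
  ultimately show ?thesis by (simp add: algebra_simps)
qed

lemma k1_op_has_real_derivative:
  assumes g: "continuous_on {0..1} g" and y: "y \<in> {0..1}"
  shows "(k1_op a g has_real_derivative integral {y..1} g) (at y within {0..1})"
proof -
  let ?F = "\<lambda>y. a * integral {0..1} g + integral {0..y} (\<lambda>t. t * g t) + y * integral {y..1} g"
  have "(?F has_real_derivative 0 + y * g y + (1 * integral {y..1} g + - g y * y)) (at y within {0..1})"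
    using g y by (intro DERIV_add DERIV_mult DERIV_const DERIV_ident integral_has_real_derivative
                        integral_has_real_derivative' continuous_intros)
  then have "(?F has_real_derivative integral {y..1} g) (at y within {0..1})"
    by simp
  then show ?thesis
    by (rule has_field_derivative_transform_within[OF _ zero_less_one y]) (simp add: k1_op_eq[OF g])
qed

lemma integral_tail_sq_le_k1_op:
  assumes "a \<ge> 0" and g: "continuous_on {0..1} g"
  shows "integral {0..1} (\<lambda>t. (integral {t..1} g)\<^sup>2) \<le> integral {0..1} (\<lambda>t. g t * k1_op a g t)"
proof -
  define G where "G y = integral {y..1} g" for y
  define h where "h = k1_op a g"
  have dG: "(G has_real_derivative - g y) (at y within {0..1})" if "y \<in> {0..1}" for y
    unfolding G_def using g that by (rule integral_has_real_derivative')
  have dh: "(h has_real_derivative G y) (at y within {0..1})" if "y \<in> {0..1}" for y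
    unfolding h_def G_def using g that by (rule k1_op_has_real_derivative)
  have "continuous_on {0..1} G" "continuous_on {0..1} h"
    unfolding continuous_on_eq_continuous_within using dG dh DERIV_continuous by blast+
  then have int: "(\<lambda>t. (G t)\<^sup>2) integrable_on {0..1}" "(\<lambda>t. g t * h t) integrable_on {0..1}"
    using g by (auto intro!: integrable_continuous_interval continuous_intros)
  \<comment> \<open>integration by parts, with boundary term \<open>G 1 * h 1 - G 0 * h 0 = - a * (\<integral>g)\<^sup>2\<close>\<close>
  have "((\<lambda>t. (G t)\<^sup>2 - g t * h t) has_integral G 1 * h 1 - G 0 * h 0) {0..1}"
  proof (rule fundamental_theorem_of_calculus)
    fix y :: real assume "y \<in> {0..1}"
    from DERIV_mult[OF dG[OF this] dh[OF this]]
    show "((\<lambda>t. G t * h t) has_vector_derivative (G y)\<^sup>2 - g y * h y) (at y within {0..1})"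
      by (simp add: has_real_derivative_iff_has_vector_derivative power2_eq_square algebra_simps)
  qed simp
  moreover have "G 1 * h 1 - G 0 * h 0 = - a * (integral {0..1} g)\<^sup>2"
    using k1_op_eq[OF g, of 0] by (simp add: G_def h_def power2_eq_square)
  ultimately have "integral {0..1} (\<lambda>t. (G t)\<^sup>2) - integral {0..1} (\<lambda>t. g t * h t) = - a * (integral {0..1} g)\<^sup>2"
    using int by (simp add: integral_diff[symmetric] integral_unique)
  moreover have "0 \<le> a * (integral {0..1} g)\<^sup>2" using \<open>a \<ge> 0\<close> by simp
  ultimately show ?thesis unfolding G_def h_def by linarith
qed

lemma k1_op_sq_le:
  assumes "a \<ge> 0" and "s > 0" and g: "continuous_on {0..1} g" and "x \<in> {0..1}"
  shows "(k1_op a g x)\<^sup>2 \<le> (1 + 1/s) *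
    (integral {0..1} (\<lambda>t. (k1_op a g t)\<^sup>2) + s\<^sup>2 * integral {0..1} (\<lambda>t. g t * k1_op a g t))"
proof -
  define G where "G y = integral {y..1} g" for y
  define A where "A = integral {0..1} (\<lambda>t. (k1_op a g t)\<^sup>2)"
  define Y where "Y = integral {0..1} (\<lambda>t. (G t)\<^sup>2)"
  define Z where "Z = integral {0..1} (\<lambda>t. g t * k1_op a g t)"
  have "continuous_on {0..1} G"
    unfolding continuous_on_eq_continuous_within G_def
    using integral_has_real_derivative'[OF g] DERIV_continuous by blast
  then have bound: "(k1_op a g x)\<^sup>2 \<le> (1 + 1/s) * A + s * Y"
    unfolding A_def Y_def G_def using k1_op_has_real_derivative[OF g] \<open>s > 0\<close> \<open>x \<in> {0..1}\<close>
    by (intro sq_le_integral_sq_plus_integral_derivative_sq) auto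
  have "0 \<le> Y"
    unfolding Y_def using \<open>continuous_on {0..1} G\<close>
    by (intro integral_nonneg integrable_continuous_interval continuous_intros) auto
  have "Y \<le> Z"
    unfolding Y_def Z_def G_def using \<open>a \<ge> 0\<close> g by (rule integral_tail_sq_le_k1_op)
  then have "s * Y + 0 \<le> s * Z + s\<^sup>2 * Z"
    using \<open>s > 0\<close> \<open>0 \<le> Y\<close> by (intro add_mono) simp_all
  with bound have "(k1_op a g x)\<^sup>2 \<le> (1 + 1/s) * A + s * Z + s\<^sup>2 * Z"
    by linarith
  also have "\<dots> = (1 + 1/s) * (A + s\<^sup>2 * Z)"
    using \<open>s > 0\<close> by (simp add: field_simps power2_eq_square)
  finally show ?thesis unfolding A_def Z_def .
qed

lemma k1_op_sum:
  assumes "finite F" and "\<And>r. r \<in> F \<Longrightarrow> continuous_on {0..1} (e r)"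
  shows "k1_op a (\<lambda>t. \<Sum>r\<in>F. \<beta> r * e r t) y = (\<Sum>r\<in>F. \<beta> r * k1_op a (e r) y)"
  unfolding k1_op_def k1_def using assms
  by (simp add: sum_distrib_left mult.left_commute integral_sum integrable_continuous_interval
                continuous_intros integral_mult_right)

lemma k1_finite_expansion_bound:
  fixes \<nu> :: "'r \<Rightarrow> real" and e :: "'r \<Rightarrow> real \<Rightarrow> real"
  assumes "a \<ge> 0" and "\<gamma> > 0" and "finite F" and "x \<in> {0..1}"
    and pos: "\<And>r. r \<in> F \<Longrightarrow> \<nu> r > 0"
    and cont: "\<And>r. r \<in> F \<Longrightarrow> continuous_on {0..1} (e r)"
    and orthonormal: "\<And>r s. r \<in> F \<Longrightarrow> s \<in> F \<Longrightarrow>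
          ((\<lambda>t. e r t * e s t) has_integral (if r = s then 1 else 0)) {0..1}"
    and eigen: "\<And>r y. r \<in> F \<Longrightarrow> y \<in> {0..1} \<Longrightarrow> k1_op a (e r) y = \<nu> r * e r y"
  shows "(\<Sum>r\<in>F. 1 / (1 + \<gamma> / \<nu> r) * (e r x)\<^sup>2) \<le> 1 + 1 / sqrt \<gamma>"
proof -
  define c where "c r = 1 / (1 + \<gamma> / \<nu> r) * e r x" for r
  define g where "g t = (\<Sum>r\<in>F. c r / \<nu> r * e r t)" for t
  define S where "S = (\<Sum>r\<in>F. 1 / (1 + \<gamma> / \<nu> r) * (e r x)\<^sup>2)"
  have Kg: "k1_op a g y = (\<Sum>r\<in>F. c r * e r y)" if "y \<in> {0..1}" for y
  proof -
    have "k1_op a g y = (\<Sum>r\<in>F. c r / \<nu> r * k1_op a (e r) y)"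
      unfolding g_def using \<open>finite F\<close> cont by (rule k1_op_sum)
    also have "\<dots> = (\<Sum>r\<in>F. c r * e r y)"
      using that pos by (intro sum.cong) (auto simp: eigen less_imp_neq[symmetric])
    finally show ?thesis .
  qed
  have "continuous_on {0..1} g"
    unfolding g_def using cont by (intro continuous_intros) auto
  have "((\<lambda>t. (\<Sum>r\<in>F. c r * e r t) * (\<Sum>r\<in>F. c r * e r t)) has_integral (\<Sum>r\<in>F. c r * c r)) {0..1}"
    using \<open>finite F\<close> orthonormal by (rule has_integral_orthonormal_expansion_product)
  then have "((\<lambda>t. (k1_op a g t)\<^sup>2) has_integral (\<Sum>r\<in>F. c r * c r)) {0..1}"
    by (rule has_integral_eq[rotated]) (simp add: Kg power2_eq_square)
  then have norm_Kg: "integral {0..1} (\<lambda>t. (k1_op a g t)\<^sup>2) = (\<Sum>r\<in>F. c r * c r)"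
    by (rule integral_unique)
  have "((\<lambda>t. (\<Sum>r\<in>F. c r / \<nu> r * e r t) * (\<Sum>r\<in>F. c r * e r t)) has_integral (\<Sum>r\<in>F. c r / \<nu> r * c r)) {0..1}"
    using \<open>finite F\<close> orthonormal by (rule has_integral_orthonormal_expansion_product)
  then have "((\<lambda>t. g t * k1_op a g t) has_integral (\<Sum>r\<in>F. c r / \<nu> r * c r)) {0..1}"
    by (rule has_integral_eq[rotated]) (simp add: Kg g_def)
  then have inner_g_Kg: "integral {0..1} (\<lambda>t. g t * k1_op a g t) = (\<Sum>r\<in>F. c r / \<nu> r * c r)"
    by (rule integral_unique)
  have "c r * c r + \<gamma> * (c r / \<nu> r * c r) = 1 / (1 + \<gamma> / \<nu> r) * (e r x)\<^sup>2" if "r \<in> F" for r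
  proof -
    have "1 + \<gamma> / \<nu> r > 0" using pos[OF that] \<open>\<gamma> > 0\<close> by (simp add: add_pos_pos)
    have "c r * c r + \<gamma> * (c r / \<nu> r * c r) = c r * c r * (1 + \<gamma> / \<nu> r)"
      by (simp add: algebra_simps)
    also have "\<dots> = 1 / (1 + \<gamma> / \<nu> r) * (e r x)\<^sup>2"
      using \<open>1 + \<gamma> / \<nu> r > 0\<close> unfolding c_def by (simp add: power2_eq_square)
    finally show ?thesis .
  qed
  then have "integral {0..1} (\<lambda>t. (k1_op a g t)\<^sup>2) + (sqrt \<gamma>)\<^sup>2 * integral {0..1} (\<lambda>t. g t * k1_op a g t) = S"
    unfolding norm_Kg inner_g_Kg S_def using \<open>\<gamma> > 0\<close>
    by (simp add: sum_distrib_left flip: sum.distrib)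
  moreover have "k1_op a g x = S"
    unfolding Kg[OF \<open>x \<in> {0..1}\<close>] S_def c_def by (simp add: power2_eq_square mult.assoc)
  ultimately have "S\<^sup>2 \<le> (1 + 1 / sqrt \<gamma>) * S"
    using k1_op_sq_le[OF \<open>a \<ge> 0\<close> _ \<open>continuous_on {0..1} g\<close> \<open>x \<in> {0..1}\<close>, of "sqrt \<gamma>"] \<open>\<gamma> > 0\<close>
    by simp
  moreover have "0 \<le> S"
    unfolding S_def using pos \<open>\<gamma> > 0\<close> by (intro sum_nonneg) (simp add: add_pos_pos less_imp_le)
  ultimately have "S \<le> 1 + 1 / sqrt \<gamma>"
    using \<open>\<gamma> > 0\<close> by (cases "S = 0") (auto simp: power2_eq_square)
  then show ?thesis unfolding S_def .
qed

lemma eigen_decomp_k1_continuous: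
  assumes decomp: "eigen_decomp {0..1} (lebesgue_on {0..1}) (k1 a) \<nu> e R" and "r \<in> R"
  shows "continuous_on {0..1} (e r)"
proof -
  let ?M = "lebesgue_on {0..1::real}"
  interpret finite_measure ?M
    by (rule finite_measure_lebesgue_on) simp
  from decomp \<open>r \<in> R\<close> have "\<nu> r > 0" and "e r \<in> borel_measurable ?M"
    and "integrable ?M (\<lambda>x. (e r x)\<^sup>2)"
    and integrable_k1: "\<And>y. y \<in> {0..1} \<Longrightarrow> integrable ?M (\<lambda>x. k1 a x y * e r x)"
    and eigen: "\<And>y. y \<in> {0..1} \<Longrightarrow> (\<integral>x. k1 a x y * e r x \<partial>?M) = \<nu> r * e r y"
    unfolding eigen_decomp_def by blast+
  have "((\<integral>x. \<bar>e r x\<bar> \<partial>?M) / \<nu> r)-lipschitz_on {0..1} (e r)"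
  proof (rule eigenfunction_lipschitz[OF \<open>\<nu> r > 0\<close> _ _ integrable_k1 eigen])
    show "integrable ?M (e r)"
      by (rule square_integrable_imp_integrable) fact+
    show "\<bar>k1 a x y - k1 a x z\<bar> \<le> \<bar>y - z\<bar>" for x y z
      by (auto simp: k1_def min_def)
  qed
  then show ?thesis
    by (rule lipschitz_on_continuous_on)
qed

lemma has_integral_lebesgue_on_continuous:
  fixes f :: "real \<Rightarrow> real"
  assumes "continuous_on {a..b} f"
  shows "(f has_integral (\<integral>x. f x \<partial>lebesgue_on {a..b})) {a..b}"
  using has_integral_integral_lebesgue_on[OF continuous_imp_integrable_real[OF assms]] by simp

lemma eigen_decomp_k1_orthonormal:
  assumes decomp: "eigen_decomp {0..1} (lebesgue_on {0..1}) (k1 a) \<nu> e R" and "r \<in> R" "s \<in> R"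
  shows "((\<lambda>t. e r t * e s t) has_integral (if r = s then 1 else 0)) {0..1}"
proof -
  have "continuous_on {0..1} (\<lambda>t. e r t * e s t)"
    using eigen_decomp_k1_continuous[OF decomp] \<open>r \<in> R\<close> \<open>s \<in> R\<close> by (intro continuous_intros)
  then have "((\<lambda>t. e r t * e s t) has_integral (\<integral>t. e r t * e s t \<partial>lebesgue_on {0..1})) {0..1}"
    by (rule has_integral_lebesgue_on_continuous)
  moreover have "(\<integral>t. e r t * e s t \<partial>lebesgue_on {0..1}) = (if r = s then 1 else 0)"
    using decomp \<open>r \<in> R\<close> \<open>s \<in> R\<close> unfolding eigen_decomp_def by blast
  ultimately show ?thesis by simp
qed

lemma eigen_decomp_k1_eigen_equation:
  assumes decomp: "eigen_decomp {0..1} (lebesgue_on {0..1}) (k1 a) \<nu> e R" and "r \<in> R" "y \<in> {0..1}"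
  shows "k1_op a (e r) y = \<nu> r * e r y"
proof -
  have "continuous_on {0..1} (\<lambda>t. k1 a t y * e r t)"
    using eigen_decomp_k1_continuous[OF decomp \<open>r \<in> R\<close>] unfolding k1_def by (intro continuous_intros)
  then have "k1_op a (e r) y = (\<integral>t. k1 a t y * e r t \<partial>lebesgue_on {0..1})"
    unfolding k1_op_def by (intro integral_unique has_integral_lebesgue_on_continuous)
  also have "\<dots> = \<nu> r * e r y"
    using decomp \<open>r \<in> R\<close> \<open>y \<in> {0..1}\<close> unfolding eigen_decomp_def by blast
  finally show ?thesis .
qed

lemma eigen_decomp_k1_partial_sum_le:
  assumes "a \<ge> 0" and "\<gamma> > 0" and decomp: "eigen_decomp {0..1} (lebesgue_on {0..1}) (k1 a) \<nu> e R"
    and "x \<in> {0..1}" and "finite F" and "F \<subseteq> R"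
  shows "(\<Sum>r\<in>F. 1 / (1 + \<gamma> / \<nu> r) * (e r x)\<^sup>2) \<le> 1 + 1 / sqrt \<gamma>"
proof (rule k1_finite_expansion_bound[OF assms(1,2) \<open>finite F\<close> \<open>x \<in> {0..1}\<close>])
  show "\<nu> r > 0" if "r \<in> F" for r
    using decomp that \<open>F \<subseteq> R\<close> unfolding eigen_decomp_def by blast
  show "continuous_on {0..1} (e r)" if "r \<in> F" for r
    using decomp subsetD[OF \<open>F \<subseteq> R\<close> that] by (rule eigen_decomp_k1_continuous)
  show "((\<lambda>t. e r t * e s t) has_integral (if r = s then 1 else 0)) {0..1}"
    if "r \<in> F" "s \<in> F" for r s
    using decomp subsetD[OF \<open>F \<subseteq> R\<close> that(1)] subsetD[OF \<open>F \<subseteq> R\<close> that(2)]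
    by (rule eigen_decomp_k1_orthonormal)
  show "k1_op a (e r) y = \<nu> r * e r y" if "r \<in> F" "y \<in> {0..1}" for r y
    using decomp subsetD[OF \<open>F \<subseteq> R\<close> that(1)] that(2) by (rule eigen_decomp_k1_eigen_equation)
qed

theorem lemma4:
  fixes a \<gamma> :: real and \<nu> :: "'r \<Rightarrow> real" and e :: "'r \<Rightarrow> real \<Rightarrow> real" and R :: "'r set"
  assumes "a \<ge> 0" and "\<gamma> > 0"
    and "eigen_decomp {0..1} (lebesgue_on {0..1}) (k1 a) \<nu> e R"
  shows "H_gamma {0..1} \<gamma> \<nu> e R \<le> ennreal (2 + 1 / sqrt \<gamma>)"
  unfolding H_gamma_def
proof (intro SUP_least infsum_le_finite_sums)
  fix x :: real and F assume "x \<in> {0..1}" "finite F" "F \<subseteq> R"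
  have "ennreal (\<Sum>r\<in>F. 1 / (1 + \<gamma> / \<nu> r) * (e r x)\<^sup>2) \<le> ennreal (2 + 1 / sqrt \<gamma>)"
    using eigen_decomp_k1_partial_sum_le[OF assms \<open>x \<in> {0..1}\<close> \<open>finite F\<close> \<open>F \<subseteq> R\<close>]
    by (intro ennreal_leI) linarith
  moreover have "0 \<le> 1 / (1 + \<gamma> / \<nu> r) * (e r x)\<^sup>2" if "r \<in> F" for r
  proof -
    have "\<nu> r > 0"
      using assms(3) that \<open>F \<subseteq> R\<close> unfolding eigen_decomp_def by blast
    then have "1 + \<gamma> / \<nu> r > 0" using \<open>\<gamma> > 0\<close> by (simp add: add_pos_pos)
    then show ?thesis by simp
  qed
  ultimately show "(\<Sum>r\<in>F. ennreal (1 / (1 + \<gamma> / \<nu> r) * (e r x)\<^sup>2)) \<le> ennreal (2 + 1 / sqrt \<gamma>)"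
    by (simp only: sum_ennreal)
qed (simp add: nonneg_summable_on_complete)

end
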